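(* Let $W\subset\mathbb{P}^n$ be a smooth nondegenerate rational normal surface scroll of minimal degree $n-1$ (a ruled surface over $\mathbb{P}^1$ whose rulings are lines), and let $Y\subset W$ be a rational normal curve of degree $k$ with $2\le k\le n-1$. If there exists a linear subspace $\mathbb{P}^k\subset\mathbb{P}^n$ with $Y\subset W\cap\mathbb{P}^k$, then $Y=W\cap\mathbb{P}^k$ (set-theoretically). *)

theory Defs
  imports Complex_Main "Jordan_Normal_Form.Matrix"
begin

text \<open>Projective space P^n over the complex numbers: a subset of P^n is represented
  by its affine cone minus the origin, i.e. a set of nonzero vectors in C^(n+1)
  closed under nonzero scalars.\<close>

definition proj_cone :: "complex vec set \<Rightarrow> complex vec set" where
  "proj_cone S = {c \<cdot>\<^sub>v x | c x. c \<noteq> 0 \<and> x \<in> S}"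

text \<open>Standard parametrization of the rational normal scroll S(a,b) in P^(a+b+1):
  ([s:t],[u:v]) maps to [u s^a : u s^(a-1) t : ... : u t^a : v s^b : ... : v t^b].\<close>

definition scroll_param :: "nat \<Rightarrow> nat \<Rightarrow> complex \<Rightarrow> complex \<Rightarrow> complex \<Rightarrow> complex \<Rightarrow> complex vec" where
  "scroll_param a b s t u v = vec (a + b + 2)
     (\<lambda>i. if i \<le> a then u * s ^ (a - i) * t ^ i
          else v * s ^ (b - (i - a - 1)) * t ^ (i - a - 1))"

definition scroll_cone :: "nat \<Rightarrow> nat \<Rightarrow> complex vec set" where
  "scroll_cone a b = proj_cone
     {scroll_param a b s t u v | s t u v. (s, t) \<noteq> (0, 0) \<and> (u, v) \<noteq> (0, 0)}"

definition smooth_rat_normal_surface_scroll :: "nat \<Rightarrow> complex vec set \<Rightarrow> bool" where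
  "smooth_rat_normal_surface_scroll n W \<longleftrightarrow>
     (\<exists>a b A. 1 \<le> a \<and> 1 \<le> b \<and> a + b + 1 = n \<and>
        A \<in> carrier_mat (n + 1) (n + 1) \<and> invertible_mat A \<and>
        W = (\<lambda>x. A *\<^sub>v x) ` scroll_cone a b)"

definition rnc_cone :: "nat \<Rightarrow> complex vec set" where
  "rnc_cone k = proj_cone {vec (k + 1) (\<lambda>i. s ^ (k - i) * t ^ i) | s t. (s, t) \<noteq> (0, 0)}"

definition lin_embedding :: "nat \<Rightarrow> nat \<Rightarrow> complex mat \<Rightarrow> bool" where
  "lin_embedding n m B \<longleftrightarrow> B \<in> carrier_mat (n + 1) (m + 1) \<and>
     (\<forall>x \<in> carrier_vec (m + 1). B *\<^sub>v x = 0\<^sub>v (n + 1) \<longrightarrow> x = 0\<^sub>v (m + 1))"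

definition rat_normal_curve :: "nat \<Rightarrow> nat \<Rightarrow> complex vec set \<Rightarrow> bool" where
  "rat_normal_curve n k Y \<longleftrightarrow>
     (\<exists>B. lin_embedding n k B \<and> Y = (\<lambda>x. B *\<^sub>v x) ` rnc_cone k)"

definition lin_subspace :: "nat \<Rightarrow> nat \<Rightarrow> complex vec set \<Rightarrow> bool" where
  "lin_subspace n m L \<longleftrightarrow>
     (\<exists>C. lin_embedding n m C \<and>
        L = {C *\<^sub>v y | y. y \<in> carrier_vec (m + 1) \<and> y \<noteq> 0\<^sub>v (m + 1)})"

end

theory Submission
  imports Defs "Jordan_Normal_Form.Determinant" "HOL-Computational_Algebra.Polynomial_Factorial"
    "HOL-Computational_Algebra.Field_as_Ring"
begin

text \<open>After a projective transformation \<open>W\<close> is the standard scroll \<open>S(a,b)\<close> and \<open>Y\<close> is the image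
  of the standard rational normal curve under a \<open>(n+1) \<times> (k+1)\<close> matrix \<open>N\<close> of full rank.
  The consecutive \<open>2 \<times> 2\<close> minors of the two coordinate blocks of \<open>S(a,b)\<close> vanish; read on the
  rows of \<open>N\<close>, viewed as polynomials of degree \<open>\<le> k\<close> in the curve parameter, they force the
  rows to be \<open>f s\<^sup>a\<^sup>-\<^sup>i t\<^sup>i\<close> and \<open>g s\<^sup>b\<^sup>-\<^sup>j t\<^sup>j\<close> with \<open>s, t\<close> coprime. As the rows span all
  polynomials of degree \<open>\<le> k\<close>, \<open>s\<close> and \<open>t\<close> are independent linear forms, so after a change of
  parameter the curve is the graph \<open>(p : q) \<mapsto> (F(p,q) : G(p,q))\<close> over the base line of the scroll.
  Since \<open>Y\<close> spans \<open>\<P>\<^sup>k\<close>, every hyperplane containing \<open>Y\<close> contains \<open>\<P>\<^sup>k\<close>. The hyperplane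
  \<open>u G(p,q) - v F(p,q) = 0\<close>, padded by a form of degree \<open>a + b - k\<close>, contains \<open>Y\<close>; hence a point
  of \<open>W \<inter> \<P>\<^sup>k\<close> over \<open>(p : q)\<close> has fibre coordinate \<open>(u : v) = (F : G)\<close> and lies on \<open>Y\<close>.\<close>

section \<open>Binary forms\<close>

text \<open>A binary form of degree \<open>d\<close> is represented by its dehomogenisation \<open>p\<close>: coefficient \<open>i\<close>
  of \<open>p\<close> is the coefficient of \<open>s\<^sup>d\<^sup>-\<^sup>i t\<^sup>i\<close>.\<close>

definition homog_eval :: "nat \<Rightarrow> 'a::comm_semiring_1 poly \<Rightarrow> 'a \<Rightarrow> 'a \<Rightarrow> 'a" where
  "homog_eval d p s t = (\<Sum>i\<le>d. coeff p i * s ^ (d - i) * t ^ i)"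

lemma homog_eval_0 [simp]: "homog_eval d 0 s t = 0"
  by (simp add: homog_eval_def)

lemma homog_eval_sum: "homog_eval d (\<Sum>x\<in>A. f x) s t = (\<Sum>x\<in>A. homog_eval d (f x) s t)"
  unfolding homog_eval_def coeff_sum sum_distrib_right by (rule sum.swap)

lemma homog_eval_smult: "homog_eval d (smult c p) s t = c * homog_eval d p s t"
  by (simp add: homog_eval_def sum_distrib_left algebra_simps)

lemma homog_eval_uminus: "homog_eval d (- p) s t = - homog_eval d p s t"
  for p :: "'a::comm_ring_1 poly"
  by (simp add: homog_eval_def sum_negf)

lemma homog_eval_linear: "homog_eval 1 p s t = coeff p 0 * s + coeff p 1 * t"
  by (simp add: homog_eval_def)

lemma homog_eval_1: "homog_eval d 1 s t = s ^ d"
proof -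
  have "homog_eval d 1 s t = (\<Sum>i\<le>d. if i = 0 then s ^ d else 0)"
    unfolding homog_eval_def by (rule sum.cong) (auto simp: coeff_1)
  then show ?thesis by simp
qed

lemma homog_eval_monom: "homog_eval d (monom 1 d) s t = t ^ d"
proof -
  have "homog_eval d (monom 1 d) s t = (\<Sum>i\<le>d. if i = d then t ^ d else 0)"
    unfolding homog_eval_def by (rule sum.cong) (auto simp: coeff_monom)
  then show ?thesis by simp
qed

lemma homog_eval_at_0: "homog_eval d p 0 t = coeff p d * t ^ d"
proof -
  have "homog_eval d p 0 t = (\<Sum>i\<le>d. if i = d then coeff p d * t ^ d else 0)"
    unfolding homog_eval_def by (rule sum.cong) (auto simp: power_0_left)
  then show ?thesis by simp
qed

lemma poly_eq_sum_coeff: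
  fixes p :: "'a::comm_semiring_1 poly"
  assumes "degree p \<le> d"
  shows "poly p x = (\<Sum>i\<le>d. coeff p i * x ^ i)"
proof -
  have "poly p x = (\<Sum>i\<le>degree p. coeff p i * x ^ i)"
    by (rule poly_altdef)
  also have "\<dots> = (\<Sum>i\<le>d. coeff p i * x ^ i)"
    by (rule sum.mono_neutral_left) (use assms in \<open>auto simp: coeff_eq_0\<close>)
  finally show ?thesis .
qed

lemma homog_eval_dehomogenize:
  fixes p :: "'a::field poly"
  assumes "s \<noteq> 0" "degree p \<le> d"
  shows "homog_eval d p s t = s ^ d * poly p (t / s)"
proof -
  have "s ^ d * poly p (t / s) = (\<Sum>i\<le>d. coeff p i * (s ^ d * (t / s) ^ i))"
    unfolding poly_eq_sum_coeff[OF assms(2)] sum_distrib_left by (simp add: algebra_simps)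
  also have "\<dots> = (\<Sum>i\<le>d. coeff p i * s ^ (d - i) * t ^ i)"
  proof (rule sum.cong)
    fix i assume "i \<in> {..d}"
    then have "s ^ d = s ^ (d - i) * s ^ i"
      by (simp flip: power_add)
    then show "coeff p i * (s ^ d * (t / s) ^ i) = coeff p i * s ^ (d - i) * t ^ i"
      using assms(1) by (simp add: power_divide)
  qed simp
  finally show ?thesis
    unfolding homog_eval_def by simp
qed

lemma homog_eval_1_left: "degree p \<le> d \<Longrightarrow> homog_eval d p 1 x = poly p x"
  for p :: "'a::field poly"
  by (simp add: homog_eval_dehomogenize)

lemma coeff_mult_at_degree_bounds:
  assumes "degree p \<le> d" "degree q \<le> e"
  shows "coeff (p * q) (d + e) = coeff p d * coeff q e"
proof -
  have "coeff p i * coeff q (d + e - i) = (if i = d then coeff p d * coeff q e else 0)" for i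
    using assms by (cases i d rule: linorder_cases) (auto simp: coeff_eq_0)
  then show ?thesis
    unfolding coeff_mult by (simp cong: sum.cong)
qed

lemma homog_eval_mult:
  fixes p :: "'a::field poly"
  assumes "degree p \<le> d" "degree q \<le> e"
  shows "homog_eval (d + e) (p * q) s t = homog_eval d p s t * homog_eval e q s t"
proof (cases "s = 0")
  case True
  then show ?thesis
    by (simp add: homog_eval_at_0 coeff_mult_at_degree_bounds[OF assms] power_add)
next
  case False
  have "degree (p * q) \<le> d + e"
    using assms degree_mult_le[of p q] by linarith
  with False assms show ?thesis
    by (simp add: homog_eval_dehomogenize poly_mult power_add)
qed

lemma degree_power_le_of_linear:
  assumes "degree p \<le> 1"
  shows "degree (p ^ m) \<le> m"
proof -
  have "degree (p ^ m) \<le> degree p * m"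
    by (rule degree_power_le)
  also have "\<dots> \<le> m"
    using assms by simp
  finally show ?thesis .
qed

lemma homog_eval_power:
  fixes p :: "'a::field poly"
  assumes "degree p \<le> 1"
  shows "homog_eval m (p ^ m) s t = homog_eval 1 p s t ^ m"
proof (induction m)
  case 0
  then show ?case by (simp add: homog_eval_def)
next
  case (Suc m)
  then show ?case
    using homog_eval_mult[OF assms degree_power_le_of_linear[OF assms], of m s t] by simp
qed

lemma homog_eval_mult_powers:
  fixes h :: "'a::field poly"
  assumes "degree l1 \<le> 1" "degree l2 \<le> 1" "h = 0 \<or> degree h + m \<le> k" "i \<le> m"
  shows "homog_eval k (h * l1 ^ (m - i) * l2 ^ i) s t
    = homog_eval (k - m) h s t * homog_eval 1 l1 s t ^ (m - i) * homog_eval 1 l2 s t ^ i"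
proof (cases "h = 0")
  case False
  with assms(3,4) have k: "k = (k - m) + (m - i) + i" and h: "degree h \<le> k - m"
    by auto
  have "degree (h * l1 ^ (m - i)) \<le> (k - m) + (m - i)"
    using degree_mult_le[of h "l1 ^ (m - i)"] degree_power_le_of_linear[OF assms(1), of "m - i"] h
    by linarith
  then show ?thesis
    using homog_eval_mult[OF _ degree_power_le_of_linear[OF assms(2)]]
      homog_eval_mult[OF h degree_power_le_of_linear[OF assms(1)]]
      homog_eval_power[OF assms(1)] homog_eval_power[OF assms(2)]
    by (subst k) simp
qed simp

lemma homog_eval_mult_padded:
  fixes h z :: "'a::field poly"
  assumes "h = 0 \<or> degree h + b \<le> k" "k \<le> a + b" "degree z \<le> a + b - k"
  shows "homog_eval a (h * z) s t = homog_eval (k - b) h s t * homog_eval (a + b - k) z s t"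
proof (cases "h = 0")
  case False
  with assms have "a = (k - b) + (a + b - k)" "degree h \<le> k - b"
    by auto
  with homog_eval_mult[OF _ assms(3)] show ?thesis
    by metis
qed simp

definition homog_subst :: "nat \<Rightarrow> 'a::comm_semiring_1 poly \<Rightarrow> 'a poly \<Rightarrow> 'a poly \<Rightarrow> 'a poly" where
  "homog_subst d p l1 l2 = (\<Sum>i\<le>d. smult (coeff p i) (l1 ^ (d - i) * l2 ^ i))"

lemma homog_subst_0 [simp]: "homog_subst d 0 l1 l2 = 0"
  by (simp add: homog_subst_def)

lemma degree_homog_subst:
  assumes "degree l1 \<le> 1" "degree l2 \<le> 1"
  shows "degree (homog_subst d p l1 l2) \<le> d"
  unfolding homog_subst_def
proof (rule degree_sum_le)
  fix i assume "i \<in> {..d}"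
  then have "degree (l1 ^ (d - i) * l2 ^ i) \<le> d"
    using degree_mult_le[of "l1 ^ (d - i)" "l2 ^ i"]
      degree_power_le_of_linear[OF assms(1), of "d - i"] degree_power_le_of_linear[OF assms(2), of i]
    by simp
  then show "degree (smult (coeff p i) (l1 ^ (d - i) * l2 ^ i)) \<le> d"
    using degree_smult_le order_trans by blast
qed simp

lemma homog_eval_homog_subst:
  fixes p :: "'a::field poly"
  assumes "degree l1 \<le> 1" "degree l2 \<le> 1"
  shows "homog_eval d (homog_subst d p l1 l2) s t
    = homog_eval d p (homog_eval 1 l1 s t) (homog_eval 1 l2 s t)"
proof -
  have "homog_eval d (homog_subst d p l1 l2) s t
      = (\<Sum>i\<le>d. coeff p i * homog_eval d (l1 ^ (d - i) * l2 ^ i) s t)"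
    unfolding homog_subst_def homog_eval_sum homog_eval_smult ..
  also have "\<dots> = (\<Sum>i\<le>d. coeff p i * homog_eval 1 l1 s t ^ (d - i) * homog_eval 1 l2 s t ^ i)"
  proof (rule sum.cong)
    fix i assume "i \<in> {..d}"
    then have "homog_eval d (l1 ^ (d - i) * l2 ^ i) s t
        = homog_eval (d - i) (l1 ^ (d - i)) s t * homog_eval i (l2 ^ i) s t"
      using homog_eval_mult[OF degree_power_le_of_linear[OF assms(1)]
          degree_power_le_of_linear[OF assms(2)], of "d - i" i s t]
      by simp
    then show "coeff p i * homog_eval d (l1 ^ (d - i) * l2 ^ i) s t
        = coeff p i * homog_eval 1 l1 s t ^ (d - i) * homog_eval 1 l2 s t ^ i"
      by (simp add: homog_eval_power[OF assms(1)] homog_eval_power[OF assms(2)])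
  qed simp
  finally show ?thesis
    unfolding homog_eval_def .
qed

section \<open>Matrices and the rational normal curve\<close>

definition rnc_point :: "nat \<Rightarrow> 'a::comm_semiring_1 \<Rightarrow> 'a \<Rightarrow> 'a vec" where
  "rnc_point k s t = vec (k + 1) (\<lambda>i. s ^ (k - i) * t ^ i)"

lemma rnc_point_carrier [simp]: "rnc_point k s t \<in> carrier_vec (k + 1)"
  by (simp add: rnc_point_def)

lemma rnc_point_nonzero:
  fixes s t :: "'a::field"
  assumes "(s, t) \<noteq> (0, 0)"
  shows "rnc_point k s t \<noteq> 0\<^sub>v (k + 1)"
proof
  assume "rnc_point k s t = 0\<^sub>v (k + 1)"
  then have "rnc_point k s t $ 0 = 0" "rnc_point k s t $ k = 0"
    by simp_all
  with assms show False
    by (simp add: rnc_point_def)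
qed

lemma smult_rnc_point_in_rnc_cone:
  "(s, t) \<noteq> (0, 0) \<Longrightarrow> c \<noteq> 0 \<Longrightarrow> c \<cdot>\<^sub>v rnc_point k s t \<in> rnc_cone k"
  unfolding rnc_cone_def proj_cone_def rnc_point_def by blast

definition row_poly :: "'a::comm_semiring_1 mat \<Rightarrow> nat \<Rightarrow> nat \<Rightarrow> 'a poly" where
  "row_poly N k r = (\<Sum>j\<le>k. monom (N $$ (r, j)) j)"

lemma coeff_row_poly: "coeff (row_poly N k r) j = (if j \<le> k then N $$ (r, j) else 0)"
proof -
  have "coeff (row_poly N k r) j = (\<Sum>i\<le>k. if j = i then N $$ (r, i) else 0)"
    unfolding row_poly_def coeff_sum by (rule sum.cong) (auto simp: coeff_monom)
  then show ?thesis by simp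
qed

lemma degree_row_poly: "degree (row_poly N k r) \<le> k"
  unfolding row_poly_def by (rule degree_sum_le) (auto intro: order_trans[OF degree_monom_le])

lemma mult_mat_vec_index_row_poly:
  assumes "N \<in> carrier_mat m (k + 1)" "r < m" "w \<in> carrier_vec (k + 1)"
  shows "(N *\<^sub>v w) $ r = (\<Sum>j<k + 1. coeff (row_poly N k r) j * w $ j)"
  using assms by (simp add: scalar_prod_def atLeast0LessThan coeff_row_poly)

lemma mult_mat_vec_rnc_point:
  assumes "N \<in> carrier_mat m (k + 1)" "r < m"
  shows "(N *\<^sub>v rnc_point k s t) $ r = homog_eval k (row_poly N k r) s t"
  unfolding mult_mat_vec_index_row_poly[OF assms rnc_point_carrier] homog_eval_def
  by (rule sum.cong) (auto simp: rnc_point_def lessThan_Suc_atMost[symmetric] mult.assoc)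

lemma mult_mat_vec_rnc_point_1:
  fixes N :: "'a::field mat"
  assumes "N \<in> carrier_mat m (k + 1)" "r < m"
  shows "(N *\<^sub>v rnc_point k 1 x) $ r = poly (row_poly N k r) x"
  using mult_mat_vec_rnc_point[OF assms] homog_eval_1_left[OF degree_row_poly] by simp

lemma functional_vanishing_on_rnc_points:
  fixes N :: "'a::field_char_0 mat"
  assumes h: "h \<in> carrier_vec m" and N: "N \<in> carrier_mat m (k + 1)"
    and vanish: "\<forall>x. h \<bullet> (N *\<^sub>v rnc_point k 1 x) = 0" and w: "w \<in> carrier_vec (k + 1)"
  shows "h \<bullet> (N *\<^sub>v w) = 0"
proof -
  define R where "R = (\<Sum>r<m. smult (h $ r) (row_poly N k r))"
  have "poly R x = h \<bullet> (N *\<^sub>v rnc_point k 1 x)" for x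
  proof -
    have "poly R x = (\<Sum>r<m. h $ r * (N *\<^sub>v rnc_point k 1 x) $ r)"
      unfolding R_def poly_sum poly_smult
      by (intro sum.cong) (simp_all add: mult_mat_vec_rnc_point_1[OF N])
    then show ?thesis
      using N by (simp add: scalar_prod_def atLeast0LessThan)
  qed
  then have "R = 0"
    using vanish poly_all_0_iff_0 by auto
  have "h \<bullet> (N *\<^sub>v w) = (\<Sum>r<m. h $ r * (N *\<^sub>v w) $ r)"
    using N by (simp add: scalar_prod_def atLeast0LessThan del: index_mult_mat_vec)
  also have "\<dots> = (\<Sum>r<m. \<Sum>j<k + 1. h $ r * (coeff (row_poly N k r) j * w $ j))"
    by (intro sum.cong) (simp_all add: mult_mat_vec_index_row_poly[OF N _ w] sum_distrib_left
        del: sum.lessThan_Suc)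
  also have "\<dots> = (\<Sum>j<k + 1. coeff R j * w $ j)"
    by (subst sum.swap) (simp add: R_def coeff_sum sum_distrib_right mult.assoc)
  finally show ?thesis
    using \<open>R = 0\<close> by simp
qed

lemma mat_kernel_nontrivial_if_row_polys_multiples_of_few:
  fixes N :: "'a::field mat" and P :: "nat \<Rightarrow> 'a poly"
  assumes N: "N \<in> carrier_mat m (k + 1)" and "M \<le> k"
    and rows: "\<forall>r<m. \<exists>l<M. \<exists>\<kappa>. row_poly N k r = smult \<kappa> (P l)"
  shows "\<exists>w\<in>carrier_vec (k + 1). w \<noteq> 0\<^sub>v (k + 1) \<and> N *\<^sub>v w = 0\<^sub>v m"
proof -
  define V where "V = mat\<^sub>r (k + 1) (k + 1)
    (\<lambda>l. if l = k then 0\<^sub>v (k + 1) else vec (k + 1) (\<lambda>j. if l < M then coeff (P l) j else 0))"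
  have V: "V \<in> carrier_mat (k + 1) (k + 1)"
    by (simp add: V_def)
  have "det V = 0"
    unfolding V_def by (rule det_row_0) auto
  then obtain w where w: "w \<in> carrier_vec (k + 1)" "w \<noteq> 0\<^sub>v (k + 1)" "V *\<^sub>v w = 0\<^sub>v (k + 1)"
    using det_0_iff_vec_prod_zero[OF V] by blast
  have P_orth: "(\<Sum>j<k + 1. coeff (P l) j * w $ j) = 0" if "l < M" for l
  proof -
    have "(V *\<^sub>v w) $ l = 0"
      using w(3) that \<open>M \<le> k\<close> by simp
    then show ?thesis
      using that \<open>M \<le> k\<close> w(1) by (simp add: V_def scalar_prod_def atLeast0LessThan)
  qed
  have "N *\<^sub>v w = 0\<^sub>v m"
  proof (rule eq_vecI)
    fix r assume "r < dim_vec (0\<^sub>v m)"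
    then have r: "r < m" by simp
    then obtain l \<kappa> where "l < M" and row: "row_poly N k r = smult \<kappa> (P l)"
      using rows by blast
    have "(N *\<^sub>v w) $ r = \<kappa> * (\<Sum>j<k + 1. coeff (P l) j * w $ j)"
      unfolding mult_mat_vec_index_row_poly[OF N r w(1)] row
      by (simp add: sum_distrib_left mult.assoc del: sum.lessThan_Suc)
    then show "(N *\<^sub>v w) $ r = 0\<^sub>v m $ r"
      using P_orth[OF \<open>l < M\<close>] r by simp
  qed (use N in simp)
  with w show ?thesis by blast
qed

lemma injective_square_mat_inverse:
  fixes A :: "'a::field mat"
  assumes A: "A \<in> carrier_mat n n"
    and inj: "\<forall>v\<in>carrier_vec n. A *\<^sub>v v = 0\<^sub>v n \<longrightarrow> v = 0\<^sub>v n"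
  obtains A' where "A' \<in> carrier_mat n n" "A * A' = 1\<^sub>m n" "A' * A = 1\<^sub>m n"
proof -
  have "det A \<noteq> 0"
    using det_0_iff_vec_prod_zero[OF A] inj by auto
  from det_non_zero_imp_unit[OF A this, of undefined] that show ?thesis
    unfolding Units_def ring_mat_def by auto
qed

lemma invertible_mat_inverse:
  fixes A :: "'a::semiring_1 mat"
  assumes A: "A \<in> carrier_mat n n" and "invertible_mat A"
  obtains A' where "A' \<in> carrier_mat n n" "A * A' = 1\<^sub>m n" "A' * A = 1\<^sub>m n"
proof -
  obtain A' where AA': "A * A' = 1\<^sub>m (dim_row A)" and A'A: "A' * A = 1\<^sub>m (dim_row A')"
    using assms(2) unfolding invertible_mat_def inverts_mat_def by blast
  have "dim_col A' = n" "dim_row A' = n"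
    using arg_cong[OF AA', of dim_col] arg_cong[OF A'A, of dim_col] A by auto
  then show ?thesis
    using A AA' A'A that by auto
qed

lemma mult_mat_vec_cancel_left:
  fixes A :: "'a::semiring_1 mat"
  assumes "A \<in> carrier_mat n n" "A' \<in> carrier_mat n n" "A' * A = 1\<^sub>m n" "x \<in> carrier_vec n"
  shows "A' *\<^sub>v (A *\<^sub>v x) = x"
  using assoc_mult_mat_vec[OF assms(2,1,4)] assms(3,4) by simp

lemma mult_mat_vec_in_preimage:
  fixes A :: "'a::semiring_1 mat"
  assumes "A \<in> carrier_mat n n" "A' \<in> carrier_mat n n" "A' * A = 1\<^sub>m n"
    and "B \<in> carrier_mat n m" "v \<in> carrier_vec m"
    and "S \<subseteq> carrier_vec n" "B *\<^sub>v v \<in> (\<lambda>x. A *\<^sub>v x) ` S"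
  shows "(A' * B) *\<^sub>v v \<in> S"
proof -
  obtain x where x: "x \<in> S" "B *\<^sub>v v = A *\<^sub>v x"
    using assms(7) by blast
  have "(A' * B) *\<^sub>v v = A' *\<^sub>v (A *\<^sub>v x)"
    unfolding assoc_mult_mat_vec[OF assms(2,4,5)] x(2) ..
  also have "\<dots> = x"
    using mult_mat_vec_cancel_left[OF assms(1-3)] x(1) assms(6) by blast
  finally show ?thesis
    using x(1) by simp
qed

definition vandermonde_mat :: "nat \<Rightarrow> 'a::semiring_1 mat" where
  "vandermonde_mat k = mat (k + 1) (k + 1) (\<lambda>(j, l). of_nat l ^ j)"

lemma vandermonde_mat_carrier: "vandermonde_mat k \<in> carrier_mat (k + 1) (k + 1)"
  by (simp add: vandermonde_mat_def)

lemma col_vandermonde_mat: "l \<le> k \<Longrightarrow> col (vandermonde_mat k) l = rnc_point k 1 (of_nat l)"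
  by (auto intro!: eq_vecI simp: vandermonde_mat_def rnc_point_def)

lemma vandermonde_mat_injective:
  fixes c :: "'a::field_char_0 vec"
  assumes c: "c \<in> carrier_vec (k + 1)" and Vc: "vandermonde_mat k *\<^sub>v c = 0\<^sub>v (k + 1)"
  shows "c = 0\<^sub>v (k + 1)"
proof (rule eq_vecI)
  have moments: "(\<Sum>l<k + 1. c $ l * of_nat l ^ j) = 0" if "j \<le> k" for j
  proof -
    have "(vandermonde_mat k *\<^sub>v c) $ j = (\<Sum>l<k + 1. c $ l * of_nat l ^ j)"
      using that c
      by (simp add: vandermonde_mat_def scalar_prod_def atLeast0LessThan mult.commute)
    with Vc that show ?thesis by simp
  qed
  have annihilated: "(\<Sum>l<k + 1. c $ l * poly p (of_nat l)) = 0" if "degree p \<le> k" for p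
  proof -
    have "(\<Sum>l<k + 1. c $ l * poly p (of_nat l))
        = (\<Sum>l<k + 1. \<Sum>j\<le>k. coeff p j * (c $ l * of_nat l ^ j))"
      by (rule sum.cong) (auto simp: poly_eq_sum_coeff[OF that] sum_distrib_left algebra_simps)
    also have "\<dots> = (\<Sum>j\<le>k. coeff p j * (\<Sum>l<k + 1. c $ l * of_nat l ^ j))"
      by (subst sum.swap) (simp only: sum_distrib_left)
    also have "\<dots> = 0"
      using moments by simp
    finally show ?thesis .
  qed
  fix l0 assume "l0 < dim_vec (0\<^sub>v (k + 1))"
  then have l0: "l0 < k + 1" by simp
  define S where "S = {0..<k + 1} - {l0}"
  define p where "p = (\<Prod>l\<in>S. [:- of_nat l, 1:] :: 'a poly)"
  have "degree p \<le> k"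
    using degree_prod_sum_le[of S "\<lambda>l. [:- of_nat l, 1 :: 'a:]"] l0
    by (simp add: p_def S_def)
  have "poly p (of_nat l) = 0" if "l < k + 1" "l \<noteq> l0" for l
    using that unfolding p_def poly_prod by (intro prod_zero) (auto simp: S_def)
  then have "(\<Sum>l<k + 1. c $ l * poly p (of_nat l)) = c $ l0 * poly p (of_nat l0)"
    using l0 by (subst sum.remove[of _ l0]) auto
  moreover have "poly p (of_nat l0) \<noteq> 0"
    unfolding p_def poly_prod by (subst prod_zero_iff) (auto simp: S_def)
  ultimately show "c $ l0 = 0\<^sub>v (k + 1) $ l0"
    using annihilated[OF \<open>degree p \<le> k\<close>] l0 by simp
qed (use c in simp)

lemma mat_factor_if_mult_eq:
  fixes B C :: "'a::field mat"
  assumes B: "B \<in> carrier_mat m n"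
    and B_inj: "\<forall>x\<in>carrier_vec n. B *\<^sub>v x = 0\<^sub>v m \<longrightarrow> x = 0\<^sub>v n"
    and C: "C \<in> carrier_mat m n" and Y: "Y \<in> carrier_mat n n" and V: "V \<in> carrier_mat n n"
    and V_inj: "\<forall>x\<in>carrier_vec n. V *\<^sub>v x = 0\<^sub>v n \<longrightarrow> x = 0\<^sub>v n"
    and CY: "C * Y = B * V"
  obtains G where "G \<in> carrier_mat n n" "C = B * G"
proof -
  obtain V' where V': "V' \<in> carrier_mat n n" "V * V' = 1\<^sub>m n"
    using injective_square_mat_inverse[OF V V_inj] by metis
  define H where "H = Y * V'"
  have H: "H \<in> carrier_mat n n"
    using Y V' by (simp add: H_def)
  have CH: "C * H = B"
  proof -
    have "C * H = (C * Y) * V'"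
      unfolding H_def using C Y V' by simp
    also have "\<dots> = B * (V * V')"
      unfolding CY using B V V' by simp
    finally show ?thesis
      using B V' by simp
  qed
  have "\<forall>x\<in>carrier_vec n. H *\<^sub>v x = 0\<^sub>v n \<longrightarrow> x = 0\<^sub>v n"
  proof (intro ballI impI)
    fix x assume x: "x \<in> carrier_vec n" and Hx: "H *\<^sub>v x = 0\<^sub>v n"
    have "B *\<^sub>v x = C *\<^sub>v (H *\<^sub>v x)"
      using CH C H x by (metis assoc_mult_mat_vec)
    also have "\<dots> = 0\<^sub>v m"
      using C Hx by auto
    finally show "x = 0\<^sub>v n"
      using B_inj x by blast
  qed
  then obtain G where G: "G \<in> carrier_mat n n" "H * G = 1\<^sub>m n"
    using injective_square_mat_inverse[OF H] by metis
  have "C = (C * H) * G"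
    using C H G by simp
  with G CH that show ?thesis
    by simp
qed

lemma mat_factor_if_rnc_points_in_range:
  fixes B C :: "'a::field_char_0 mat"
  assumes B: "B \<in> carrier_mat m (k + 1)"
    and B_inj: "\<forall>x\<in>carrier_vec (k + 1). B *\<^sub>v x = 0\<^sub>v m \<longrightarrow> x = 0\<^sub>v (k + 1)"
    and C: "C \<in> carrier_mat m (k + 1)"
    and in_range: "\<forall>x. \<exists>y\<in>carrier_vec (k + 1). B *\<^sub>v rnc_point k 1 x = C *\<^sub>v y"
  obtains G where "G \<in> carrier_mat (k + 1) (k + 1)" "C = B * G"
proof -
  have "\<forall>l. \<exists>y. y \<in> carrier_vec (k + 1) \<and> B *\<^sub>v rnc_point k 1 (of_nat l) = C *\<^sub>v y"
    using in_range by blast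
  then obtain y where y: "\<And>l. y l \<in> carrier_vec (k + 1)"
    "\<And>l. B *\<^sub>v rnc_point k 1 (of_nat l) = C *\<^sub>v y l"
    by metis
  define Y where "Y = mat (k + 1) (k + 1) (\<lambda>(i, l). y l $ i)"
  define V where "V = (vandermonde_mat k :: 'a mat)"
  have Y: "Y \<in> carrier_mat (k + 1) (k + 1)"
    by (simp add: Y_def)
  have V: "V \<in> carrier_mat (k + 1) (k + 1)"
    unfolding V_def by (rule vandermonde_mat_carrier)
  have "C * Y = B * V"
  proof (rule eq_matI)
    fix i l assume "i < dim_row (B * V)" "l < dim_col (B * V)"
    then have i: "i < m" and l: "l \<le> k"
      using B V by auto
    have "col Y l = y l"
      using l y(1)[of l] unfolding Y_def by (auto intro!: eq_vecI)
    then have "(C * Y) $$ (i, l) = (C *\<^sub>v y l) $ i"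
      using i l C Y by simp
    also have "\<dots> = (B *\<^sub>v rnc_point k 1 (of_nat l)) $ i"
      by (simp add: y(2))
    also have "\<dots> = (B * V) $$ (i, l)"
      using i l B V by (simp add: V_def col_vandermonde_mat[OF l])
    finally show "(C * Y) $$ (i, l) = (B * V) $$ (i, l)" .
  qed (use B C Y V in auto)
  with mat_factor_if_mult_eq[OF B B_inj C Y V] vandermonde_mat_injective that show ?thesis
    unfolding V_def by blast
qed

lemma lin_subspace_in_range:
  assumes B: "lin_embedding n k B" and L: "lin_subspace n k L"
    and curve: "(\<lambda>x. B *\<^sub>v x) ` rnc_cone k \<subseteq> L"
  shows "L \<subseteq> (\<lambda>w. B *\<^sub>v w) ` carrier_vec (k + 1)"
proof
  obtain C where C: "lin_embedding n k C"
    and L_eq: "L = {C *\<^sub>v y | y. y \<in> carrier_vec (k + 1) \<and> y \<noteq> 0\<^sub>v (k + 1)}"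
    using L unfolding lin_subspace_def by blast
  have B_carrier: "B \<in> carrier_mat (n + 1) (k + 1)"
    and B_inj: "\<forall>x\<in>carrier_vec (k + 1). B *\<^sub>v x = 0\<^sub>v (n + 1) \<longrightarrow> x = 0\<^sub>v (k + 1)"
    and C_carrier: "C \<in> carrier_mat (n + 1) (k + 1)"
    using B C unfolding lin_embedding_def by auto
  have "\<forall>x. \<exists>y\<in>carrier_vec (k + 1). B *\<^sub>v rnc_point k 1 x = C *\<^sub>v y"
  proof
    fix x :: complex
    have "B *\<^sub>v rnc_point k 1 x \<in> L"
      using curve smult_rnc_point_in_rnc_cone[of 1 x 1 k] by auto
    then show "\<exists>y\<in>carrier_vec (k + 1). B *\<^sub>v rnc_point k 1 x = C *\<^sub>v y"
      unfolding L_eq by blast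
  qed
  then obtain G where G: "G \<in> carrier_mat (k + 1) (k + 1)" "C = B * G"
    using mat_factor_if_rnc_points_in_range[OF B_carrier B_inj C_carrier] by blast
  fix z assume "z \<in> L"
  then obtain y where "y \<in> carrier_vec (k + 1)" "z = C *\<^sub>v y"
    unfolding L_eq by blast
  with G B_carrier have "G *\<^sub>v y \<in> carrier_vec (k + 1)" "z = B *\<^sub>v (G *\<^sub>v y)"
    by auto
  then show "z \<in> (\<lambda>w. B *\<^sub>v w) ` carrier_vec (k + 1)"
    by blast
qed

section \<open>Coprime and linear polynomials\<close>

lemma chain_cross_products:
  fixes s t :: "'a::comm_semiring_1"
  assumes chain: "\<forall>i<m. Z i * t = Z (Suc i) * s" and "i \<le> m"
  shows "Z 0 * t ^ i = Z i * s ^ i"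
  using \<open>i \<le> m\<close>
proof (induction i)
  case (Suc i)
  then have "Z 0 * t ^ Suc i = Z i * t * s ^ i"
    by (simp add: algebra_simps)
  also have "\<dots> = Z (Suc i) * s ^ Suc i"
    using chain Suc.prems by (simp add: algebra_simps)
  finally show ?case .
qed simp

lemma coprime_chain_factor:
  fixes s t :: "'a::factorial_ring_gcd"
  assumes cop: "coprime s t" and chain: "\<forall>i<m. Z i * t = Z (Suc i) * s"
  shows "\<exists>f. \<forall>i\<le>m. Z i = f * s ^ (m - i) * t ^ i"
proof (cases "s = 0")
  case True
  with cop have "is_unit t"
    by simp
  have "Z i = Z m div t ^ m * s ^ (m - i) * t ^ i" if "i \<le> m" for i
  proof (cases "i = m")
    case True
    with \<open>is_unit t\<close> show ?thesis
      by (simp add: is_unit_power_iff unit_imp_dvd)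
  next
    case False
    with that \<open>is_unit t\<close> have "i < m" "t \<noteq> 0"
      by auto
    with chain \<open>s = 0\<close> show ?thesis
      by simp
  qed
  then show ?thesis by blast
next
  case False
  have "s ^ m dvd Z 0 * t ^ m"
    using chain_cross_products[OF chain order_refl] by simp
  moreover have "coprime (s ^ m) (t ^ m)"
    using cop by simp
  ultimately obtain f where Z0: "Z 0 = s ^ m * f"
    by (metis coprime_dvd_mult_left_iff dvdE)
  have "Z i = f * s ^ (m - i) * t ^ i" if "i \<le> m" for i
  proof -
    have "s ^ m = s ^ (m - i) * s ^ i"
      using that by (simp flip: power_add)
    have "Z i * s ^ i = s ^ m * f * t ^ i"
      using chain_cross_products[OF chain that] Z0 by simp
    also have "\<dots> = (f * s ^ (m - i) * t ^ i) * s ^ i"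
      unfolding \<open>s ^ m = s ^ (m - i) * s ^ i\<close> by (simp add: algebra_simps)
    finally have "Z i * s ^ i = (f * s ^ (m - i) * t ^ i) * s ^ i" .
    moreover have "s ^ i \<noteq> 0"
      using \<open>s \<noteq> 0\<close> by simp
    ultimately show ?thesis
      using mult_right_cancel by blast
  qed
  then show ?thesis by blast
qed

lemma linear_poly_dvd_if_det_zero:
  fixes s t :: "'a::field poly"
  assumes s: "degree s = 1" and t: "degree t \<le> 1"
    and det: "coeff s 0 * coeff t 1 - coeff s 1 * coeff t 0 = 0"
  shows "s dvd t"
proof -
  have "coeff s 1 \<noteq> 0"
    using s leading_coeff_0_iff[of s] by fastforce
  have "t = smult (coeff t 1 / coeff s 1) s"
  proof (rule poly_eqI)
    fix n
    show "coeff t n = coeff (smult (coeff t 1 / coeff s 1) s) n"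
    proof (cases n)
      case 0
      then show ?thesis
        using det \<open>coeff s 1 \<noteq> 0\<close> by (simp add: field_simps)
    next
      case (Suc m)
      then show ?thesis
        using s t \<open>coeff s 1 \<noteq> 0\<close> by (cases m) (auto simp: coeff_eq_0)
    qed
  qed
  then show ?thesis
    by (metis dvd_smult dvd_refl)
qed

lemma coprime_linear_polys_det_nonzero:
  fixes s t :: "'a::field_gcd poly"
  assumes "degree s \<le> 1" "degree t \<le> 1" "degree s = 1 \<or> degree t = 1" "coprime s t"
  shows "coeff s 0 * coeff t 1 - coeff s 1 * coeff t 0 \<noteq> 0"
proof
  assume det: "coeff s 0 * coeff t 1 - coeff s 1 * coeff t 0 = 0"
  have "s dvd t \<and> degree s = 1 \<or> t dvd s \<and> degree t = 1"
  proof (cases "degree s = 1")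
    case True
    then show ?thesis
      using linear_poly_dvd_if_det_zero[OF True assms(2) det] by blast
  next
    case False
    with assms(3) have "degree t = 1" by simp
    moreover have "coeff t 0 * coeff s 1 - coeff t 1 * coeff s 0 = 0"
      using det by (simp add: algebra_simps)
    ultimately show ?thesis
      using linear_poly_dvd_if_det_zero[OF _ assms(1)] by blast
  qed
  then show False
    using assms(4) by (metis coprime_common_divisor coprime_commute dvd_refl is_unit_iff_degree
        zero_neq_one degree_0)
qed

lemma linear_change_of_coordinates:
  fixes s t :: "'a::field poly"
  assumes "degree s \<le> 1" "degree t \<le> 1"
    and det: "coeff s 0 * coeff t 1 - coeff s 1 * coeff t 0 \<noteq> 0"
  obtains l1 l2 where "degree l1 \<le> 1" "degree l2 \<le> 1"
    "\<And>x y. homog_eval 1 l1 (homog_eval 1 s x y) (homog_eval 1 t x y) = x"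
    "\<And>x y. homog_eval 1 l2 (homog_eval 1 s x y) (homog_eval 1 t x y) = y"
    "\<And>p q. homog_eval 1 s (homog_eval 1 l1 p q) (homog_eval 1 l2 p q) = p"
    "\<And>p q. homog_eval 1 t (homog_eval 1 l1 p q) (homog_eval 1 l2 p q) = q"
proof
  define D where "D = coeff s 0 * coeff t 1 - coeff s 1 * coeff t 0"
  \<comment> \<open>Cramer's rule for the inverse of the \<open>2 \<times> 2\<close> coefficient matrix.\<close>
  define l1 where "l1 = [:coeff t 1 / D, - coeff s 1 / D:]"
  define l2 where "l2 = [:- coeff t 0 / D, coeff s 0 / D:]"
  have "D \<noteq> 0"
    using det by (simp add: D_def)
  show "degree l1 \<le> 1" "degree l2 \<le> 1"
    by (simp_all add: l1_def l2_def degree_pCons_le)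
  fix x y
  show "homog_eval 1 l1 (homog_eval 1 s x y) (homog_eval 1 t x y) = x"
    "homog_eval 1 l2 (homog_eval 1 s x y) (homog_eval 1 t x y) = y"
    "homog_eval 1 s (homog_eval 1 l1 x y) (homog_eval 1 l2 x y) = x"
    "homog_eval 1 t (homog_eval 1 l1 x y) (homog_eval 1 l2 x y) = y"
    using \<open>D \<noteq> 0\<close> unfolding homog_eval_linear l1_def l2_def
    by (simp_all add: field_simps) (simp_all add: D_def algebra_simps)
qed

lemma proportional_if_cross_products_eq:
  fixes u v x y :: "'a::field"
  assumes "(x, y) \<noteq> (0, 0)" "u * y = v * x"
  obtains \<mu> where "u = \<mu> * x" "v = \<mu> * y"
proof (cases "x = 0")
  case True
  with assms have "y \<noteq> 0" "u = 0" by auto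
  with True that[of "v / y"] show ?thesis by simp
next
  case False
  with assms(2) that[of "u / x"] show ?thesis by (simp add: field_simps)
qed

section \<open>The standard scroll\<close>

lemma dim_scroll_param [simp]: "dim_vec (scroll_param a b s t u v) = a + b + 2"
  by (simp add: scroll_param_def)

lemma scroll_param_carrier [simp]: "scroll_param a b s t u v \<in> carrier_vec (a + b + 2)"
  by (rule carrier_vecI) simp

lemma index_scroll_param:
  "r < a + b + 2 \<Longrightarrow> scroll_param a b s t u v $ r =
    (if r \<le> a then u * s ^ (a - r) * t ^ r else v * s ^ (b - (r - a - 1)) * t ^ (r - a - 1))"
  by (simp add: scroll_param_def)

lemma scroll_param_smult: "scroll_param a b s t (c * u) (c * v) = c \<cdot>\<^sub>v scroll_param a b s t u v"
  by (rule eq_vecI) (simp_all add: index_scroll_param mult.assoc)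

lemma scroll_param_0_0: "scroll_param a b s t 0 0 = 0\<^sub>v (a + b + 2)"
  by (rule eq_vecI) (simp_all add: index_scroll_param)

lemma scroll_cone_subset_carrier: "scroll_cone a b \<subseteq> carrier_vec (a + b + 2)"
  unfolding scroll_cone_def proj_cone_def by (auto intro!: carrier_vecI)

lemma scroll_param_consecutive:
  assumes "r < a + b + 1" "r \<noteq> a"
  obtains \<kappa> where "scroll_param a b s t u v $ r = \<kappa> * s"
    "scroll_param a b s t u v $ (r + 1) = \<kappa> * t"
proof (cases "r < a")
  case True
  have "s ^ (a - r) = s ^ (a - Suc r) * s"
    using Suc_diff_Suc[OF True] by (metis power_Suc2)
  then show ?thesis
    using True by (intro that[of "u * s ^ (a - Suc r) * t ^ r"]) (simp_all add: index_scroll_param)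
next
  case False
  define j where "j = r - a - 1"
  have j: "j < b" "r = a + 1 + j"
    using False assms unfolding j_def by auto
  have "s ^ (b - j) = s ^ (b - Suc j) * s"
    using Suc_diff_Suc[OF \<open>j < b\<close>] by (metis power_Suc2)
  then show ?thesis
    using j by (intro that[of "v * s ^ (b - Suc j) * t ^ j"]) (simp_all add: index_scroll_param)
qed

lemma scroll_cone_minor:
  assumes "x \<in> scroll_cone a b"
    and "r < a + b + 1" "r \<noteq> a" "r' < a + b + 1" "r' \<noteq> a"
  shows "x $ r * x $ (r' + 1) = x $ (r + 1) * x $ r'"
proof -
  obtain c s t u v where x: "x = c \<cdot>\<^sub>v scroll_param a b s t u v"
    using assms(1) unfolding scroll_cone_def proj_cone_def by blast
  obtain \<kappa> where "scroll_param a b s t u v $ r = \<kappa> * s" "scroll_param a b s t u v $ (r + 1) = \<kappa> * t"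
    using scroll_param_consecutive[OF assms(2,3)] .
  moreover obtain \<kappa>' where "scroll_param a b s t u v $ r' = \<kappa>' * s"
    "scroll_param a b s t u v $ (r' + 1) = \<kappa>' * t"
    using scroll_param_consecutive[OF assms(4,5)] .
  ultimately show ?thesis
    using assms(2,4) by (simp add: x)
qed

definition scroll_functional :: "nat \<Rightarrow> nat \<Rightarrow> complex poly \<Rightarrow> complex poly \<Rightarrow> complex vec" where
  "scroll_functional a b E F = vec (a + b + 2) (\<lambda>r. if r \<le> a then coeff E r else coeff F (r - a - 1))"

lemma scroll_functional_carrier: "scroll_functional a b E F \<in> carrier_vec (a + b + 2)"
  by (simp add: scroll_functional_def)

lemma sum_lessThan_add_2_split:
  "(\<Sum>r<a + b + 2. f r) = (\<Sum>i\<le>a. f i) + (\<Sum>j\<le>b. f (a + 1 + j))" for a b :: nat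
proof (induction b)
  case 0
  then show ?case by (simp add: lessThan_Suc_atMost[symmetric])
next
  case (Suc b)
  then show ?case by (simp add: add.assoc)
qed

lemma scalar_prod_scroll_functional:
  "scroll_functional a b E F \<bullet> scroll_param a b s t u v
    = u * homog_eval a E s t + v * homog_eval b F s t"
proof -
  have "scroll_functional a b E F \<bullet> scroll_param a b s t u v
      = (\<Sum>i\<le>a. u * (coeff E i * s ^ (a - i) * t ^ i))
        + (\<Sum>j\<le>b. v * (coeff F j * s ^ (b - j) * t ^ j))"
    unfolding scalar_prod_def dim_scroll_param atLeast0LessThan sum_lessThan_add_2_split
    by (intro arg_cong2[where f = "(+)"] sum.cong)
      (auto simp: scroll_functional_def index_scroll_param)
  then show ?thesis
    by (simp add: homog_eval_def sum_distrib_left)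
qed

lemma scroll_point_on_graph:
  fixes N :: "complex mat" and S T :: "complex \<Rightarrow> complex \<Rightarrow> complex" and F G :: "complex poly"
  assumes N: "N \<in> carrier_mat (a + b + 2) (k + 1)" and "k \<le> a + b"
    and F: "F = 0 \<or> degree F + a \<le> k" and G: "G = 0 \<or> degree G + b \<le> k"
    and graph: "\<And>x y. N *\<^sub>v rnc_point k x y = scroll_param a b (S x y) (T x y)
      (homog_eval (k - a) F (S x y) (T x y)) (homog_eval (k - b) G (S x y) (T x y))"
    and w: "w \<in> carrier_vec (k + 1)" and Nw: "N *\<^sub>v w = c \<cdot>\<^sub>v scroll_param a b p q u v"
    and "c \<noteq> 0" "(p, q) \<noteq> (0, 0)"
  shows "u * homog_eval (k - b) G p q = v * homog_eval (k - a) F p q"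
proof -
  define e where "e = a + b - k"
  \<comment> \<open>The linear form \<open>h\<close> below restricts to \<open>Z(x, y) (u G(x, y) - v F(x, y))\<close> on the scroll:
    the padding \<open>Z\<close> of degree \<open>e\<close> brings the two blocks to degrees \<open>a\<close> and \<open>b\<close>, and is chosen
    not to vanish at \<open>(p, q)\<close>.\<close>
  define Z :: "complex poly" where "Z = (if p \<noteq> 0 then 1 else monom 1 e)"
  have "degree Z \<le> e"
    by (simp add: Z_def degree_monom_eq)
  have Z_pq: "homog_eval e Z p q \<noteq> 0"
    using \<open>(p, q) \<noteq> (0, 0)\<close> by (auto simp: Z_def homog_eval_1 homog_eval_monom)
  have E: "homog_eval a (G * Z) x y = homog_eval (k - b) G x y * homog_eval e Z x y" for x y
    using homog_eval_mult_padded[OF G \<open>k \<le> a + b\<close>] \<open>degree Z \<le> e\<close> by (simp add: e_def)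
  have E': "homog_eval b (- (F * Z)) x y = - (homog_eval (k - a) F x y * homog_eval e Z x y)" for x y
    using homog_eval_mult_padded[of F a k b Z] F \<open>k \<le> a + b\<close> \<open>degree Z \<le> e\<close>
    by (simp add: e_def homog_eval_uminus add.commute)
  define h where "h = scroll_functional a b (G * Z) (- (F * Z))"
  have h_scroll: "h \<bullet> scroll_param a b x y u' v'
      = homog_eval e Z x y * (u' * homog_eval (k - b) G x y - v' * homog_eval (k - a) F x y)"
    for x y u' v'
    by (simp add: h_def scalar_prod_scroll_functional E E' algebra_simps)
  have "h \<bullet> (N *\<^sub>v rnc_point k 1 x) = 0" for x
    by (simp add: graph h_scroll)
  then have "h \<bullet> (N *\<^sub>v w) = 0"
    using functional_vanishing_on_rnc_points[OF _ N _ w] scroll_functional_carrier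
    unfolding h_def by blast
  then have "c * (homog_eval e Z p q * (u * homog_eval (k - b) G p q - v * homog_eval (k - a) F p q)) = 0"
    using scalar_prod_smult_distrib[OF scroll_functional_carrier scroll_param_carrier]
    by (simp add: Nw h_scroll[symmetric] h_def)
  with \<open>c \<noteq> 0\<close> Z_pq show ?thesis
    by simp
qed

section \<open>A rational normal curve on the standard scroll\<close>

locale rnc_in_scroll =
  fixes a b k :: nat and N :: "complex mat"
  assumes a_pos: "1 \<le> a" and b_pos: "1 \<le> b" and k_ge_2: "2 \<le> k" and k_le: "k \<le> a + b"
    and N_carrier: "N \<in> carrier_mat (a + b + 2) (k + 1)"
    and N_inj: "\<forall>w\<in>carrier_vec (k + 1). N *\<^sub>v w = 0\<^sub>v (a + b + 2) \<longrightarrow> w = 0\<^sub>v (k + 1)"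
    and N_rnc_in_scroll_cone: "\<forall>s t. (s, t) \<noteq> (0, 0) \<longrightarrow> N *\<^sub>v rnc_point k s t \<in> scroll_cone a b"
begin

abbreviation X :: "nat \<Rightarrow> complex poly" where
  "X r \<equiv> row_poly N k r"

lemma row_polys_not_multiples_of_few:
  assumes "M \<le> k"
    and first: "\<forall>i\<le>a. \<exists>l<M. \<exists>\<kappa>. X i = smult \<kappa> (P l)"
    and second: "\<forall>j\<le>b. \<exists>l<M. \<exists>\<kappa>. X (a + 1 + j) = smult \<kappa> (P l)"
  shows False
proof -
  have "\<forall>r<a + b + 2. \<exists>l<M. \<exists>\<kappa>. X r = smult \<kappa> (P l)"
  proof (intro allI impI)
    fix r assume r: "r < a + b + 2"
    show "\<exists>l<M. \<exists>\<kappa>. X r = smult \<kappa> (P l)"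
    proof (cases "r \<le> a")
      case True
      with first show ?thesis by blast
    next
      case False
      with r second[rule_format, of "r - a - 1"] show ?thesis by simp
    qed
  qed
  with mat_kernel_nontrivial_if_row_polys_multiples_of_few[OF N_carrier \<open>M \<le> k\<close>] N_inj show False
    by blast
qed

lemma row_poly_minor:
  assumes "r < a + b + 1" "r \<noteq> a" "r' < a + b + 1" "r' \<noteq> a"
  shows "X r * X (r' + 1) = X (r + 1) * X r'"
proof -
  have "poly (X r * X (r' + 1)) x = poly (X (r + 1) * X r') x" for x
    using scroll_cone_minor[OF N_rnc_in_scroll_cone[rule_format, of 1 x] assms] assms
    by (simp add: mult_mat_vec_rnc_point_1[OF N_carrier])
  then show ?thesis
    by (simp add: poly_eq_poly_eq_iff[symmetric] fun_eq_iff)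
qed

lemma row_polys_not_all_zero: "\<exists>r<a + b + 2. X r \<noteq> 0"
proof (rule ccontr)
  assume "\<not> ?thesis"
  then show False
    using row_polys_not_multiples_of_few[of 1 "\<lambda>_. 0"] k_ge_2 by auto
qed

lemma consecutive_row_polys_not_both_zero:
  obtains r where "r < a + b + 1" "r \<noteq> a" "X r \<noteq> 0 \<or> X (r + 1) \<noteq> 0"
proof -
  obtain r where r: "r < a + b + 2" "X r \<noteq> 0"
    using row_polys_not_all_zero by blast
  consider "r < a + b + 1" "r \<noteq> a" | "r = a" | "r = a + b + 1"
    using r(1) by linarith
  then show ?thesis
  proof cases
    case 1
    with r that show ?thesis by blast
  next
    case 2
    with r a_pos that[of "a - 1"] show ?thesis by simp
  next
    case 3
    with r b_pos that[of "a + b"] show ?thesis by simp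
  qed
qed

text \<open>\<open>s\<close> and \<open>t\<close> are the coprime parts of a consecutive pair of row polynomials that are
  not both zero; the vanishing minors then propagate along each block.\<close>

lemma row_polys_factor:
  obtains s t f g where "coprime s t"
    "\<forall>i\<le>a. X i = f * s ^ (a - i) * t ^ i"
    "\<forall>j\<le>b. X (a + 1 + j) = g * s ^ (b - j) * t ^ j"
proof -
  obtain r0 where r0: "r0 < a + b + 1" "r0 \<noteq> a" "X r0 \<noteq> 0 \<or> X (r0 + 1) \<noteq> 0"
    using consecutive_row_polys_not_both_zero by blast
  define d where "d = gcd (X r0) (X (r0 + 1))"
  define s where "s = X r0 div d"
  define t where "t = X (r0 + 1) div d"
  have cop: "coprime s t"
    unfolding s_def t_def d_def using r0(3) by (rule div_gcd_coprime)
  have "d \<noteq> 0"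
    unfolding d_def using r0(3) by simp
  have rel: "X r * t = X (Suc r) * s" if "r < a + b + 1" "r \<noteq> a" for r
  proof -
    have "X r0 * X (r + 1) = X (r0 + 1) * X r"
      using row_poly_minor[OF r0(1,2) that] .
    then have "d * (X (r + 1) * s) = d * (X r * t)"
      unfolding s_def t_def d_def by (simp add: algebra_simps)
    with \<open>d \<noteq> 0\<close> show ?thesis by simp
  qed
  obtain f where "\<forall>i\<le>a. X i = f * s ^ (a - i) * t ^ i"
    using coprime_chain_factor[OF cop, of a X] rel by auto
  moreover obtain g where "\<forall>j\<le>b. X (a + 1 + j) = g * s ^ (b - j) * t ^ j"
    using coprime_chain_factor[OF cop, of b "\<lambda>j. X (a + 1 + j)"] rel by auto
  ultimately show ?thesis
    using that cop by blast
qed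

lemma degree_block_factor:
  assumes "coprime s t" and block: "\<forall>i\<le>m. X (r + i) = f * s ^ (m - i) * t ^ i" and "f \<noteq> 0"
    and "d \<le> max (degree s) (degree t)"
  shows "degree f + m * d \<le> k"
proof -
  have "degree (f * s ^ m) \<le> k" "degree (f * t ^ m) \<le> k"
    using block[rule_format, of 0] block[rule_format, of m]
      degree_row_poly[of N k r] degree_row_poly[of N k "r + m"]
    by auto
  then have "degree f + m * degree s \<le> k \<or> s = 0" "degree f + m * degree t \<le> k \<or> t = 0"
    using \<open>f \<noteq> 0\<close> by (auto simp: degree_mult_eq degree_power_eq)
  moreover have "s \<noteq> 0 \<or> t \<noteq> 0"
    using assms(1) by auto
  ultimately have "degree f + m * max (degree s) (degree t) \<le> k"
    by (auto simp: max_def)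
  with \<open>d \<le> max (degree s) (degree t)\<close> show ?thesis
    by (meson add_left_mono mult_le_mono2 order_trans)
qed

lemma row_factors_not_both_constant:
  assumes "\<forall>i\<le>a. X i = f * s ^ (a - i) * t ^ i" "\<forall>j\<le>b. X (a + 1 + j) = g * s ^ (b - j) * t ^ j"
  shows "\<not> (degree s = 0 \<and> degree t = 0)"
proof
  assume "degree s = 0 \<and> degree t = 0"
  then have "s = [:coeff s 0:]" "t = [:coeff t 0:]"
    by (simp_all add: degree_0_id)
  then have s: "s ^ n = [:coeff s 0 ^ n:]" and t: "t ^ n = [:coeff t 0 ^ n:]" for n
    by (metis poly_const_pow)+
  define P where "P l = (if l = 0 then f else g)" for l :: nat
  have "X i = smult (coeff s 0 ^ (a - i) * coeff t 0 ^ i) (P 0)" if "i \<le> a" for i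
    using assms(1) that by (simp add: s t P_def mult.commute)
  moreover have "X (a + 1 + j) = smult (coeff s 0 ^ (b - j) * coeff t 0 ^ j) (P 1)" if "j \<le> b" for j
    using assms(2) that by (simp add: s t P_def mult.commute)
  moreover have "(0::nat) < 2" "(1::nat) < 2"
    by simp_all
  ultimately show False
    using row_polys_not_multiples_of_few[of 2 P] k_ge_2 by blast
qed

lemma row_polys_not_multiples_of_first_block:
  assumes "a + 1 \<le> k" and "\<forall>j\<le>b. \<exists>l\<le>a. \<exists>\<kappa>. X (a + 1 + j) = smult \<kappa> (X l)"
  shows False
proof (rule row_polys_not_multiples_of_few[of "a + 1" X])
  show "\<forall>i\<le>a. \<exists>l<a + 1. \<exists>\<kappa>. X i = smult \<kappa> (X l)"
    by (metis less_Suc_eq_le Suc_eq_plus1 smult_1_left)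
qed (use assms in \<open>auto simp: less_Suc_eq_le\<close>)

lemma row_polys_not_multiples_of_second_block:
  assumes "b + 1 \<le> k" and "\<forall>i\<le>a. \<exists>l\<le>b. \<exists>\<kappa>. X i = smult \<kappa> (X (a + 1 + l))"
  shows False
proof (rule row_polys_not_multiples_of_few[of "b + 1" "\<lambda>l. X (a + 1 + l)"])
  show "\<forall>j\<le>b. \<exists>l<b + 1. \<exists>\<kappa>. X (a + 1 + j) = smult \<kappa> (X (a + 1 + l))"
    by (metis less_Suc_eq_le Suc_eq_plus1 smult_1_left)
qed (use assms in \<open>auto simp: less_Suc_eq_le\<close>)

lemma row_factors_degree_le_1:
  assumes cop: "coprime s t"
    and f: "\<forall>i\<le>a. X i = f * s ^ (a - i) * t ^ i"
    and g: "\<forall>j\<le>b. X (a + 1 + j) = g * s ^ (b - j) * t ^ j"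
  shows "max (degree s) (degree t) \<le> 1"
proof (rule ccontr)
  assume "\<not> ?thesis"
  then have two: "2 \<le> max (degree s) (degree t)"
    by (simp add: max_def split: if_splits)
  have deg_f: "degree f + a * 2 \<le> k" if "f \<noteq> 0"
    using degree_block_factor[of s t a 0 f 2] cop f that two by simp
  have deg_g: "degree g + b * 2 \<le> k" if "g \<noteq> 0"
    using degree_block_factor[OF cop g that two] .
  consider "f = 0" "g = 0" | "f \<noteq> 0" "g = 0" | "f = 0" "g \<noteq> 0" | "f \<noteq> 0" "g \<noteq> 0"
    by blast
  then show False
  proof cases
    case 1
    then show False
      using row_polys_not_multiples_of_few[of 1 "\<lambda>_. 0"] f g k_ge_2 by auto
  next
    case 2
    with g have "\<forall>j\<le>b. \<exists>l\<le>a. \<exists>\<kappa>. X (a + 1 + j) = smult \<kappa> (X l)"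
      by (metis le0 mult_zero_left smult_0_left)
    with deg_f 2 a_pos show False
      by (intro row_polys_not_multiples_of_first_block) auto
  next
    case 3
    with f have "\<forall>i\<le>a. \<exists>l\<le>b. \<exists>\<kappa>. X i = smult \<kappa> (X (a + 1 + l))"
      by (metis le0 mult_zero_left smult_0_left)
    with deg_g 3 b_pos show False
      by (intro row_polys_not_multiples_of_second_block) auto
  next
    case 4
    then have "a = b" "degree f = 0" "degree g = 0"
      using deg_f deg_g k_le by linarith+
    then obtain \<kappa> where \<kappa>: "g = smult \<kappa> f"
      using \<open>f \<noteq> 0\<close> by (metis degree_0_id smult_pCons smult_0_right divide_eq_0_iff
          nonzero_eq_divide_eq leading_coeff_0_iff)
    have "\<forall>j\<le>b. \<exists>l\<le>a. \<exists>\<kappa>. X (a + 1 + j) = smult \<kappa> (X l)"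
    proof (intro allI impI)
      fix j assume "j \<le> b"
      with f g \<kappa> \<open>a = b\<close> have "X (a + 1 + j) = smult \<kappa> (X j)"
        by simp
      with \<open>j \<le> b\<close> \<open>a = b\<close> show "\<exists>l\<le>a. \<exists>\<kappa>. X (a + 1 + j) = smult \<kappa> (X l)"
        by blast
    qed
    with deg_f 4 a_pos show False
      by (intro row_polys_not_multiples_of_first_block) auto
  qed
qed

lemma rnc_point_in_scroll_coordinates:
  assumes s: "degree s \<le> 1" and t: "degree t \<le> 1"
    and f: "\<forall>i\<le>a. X i = f * s ^ (a - i) * t ^ i" "f = 0 \<or> degree f + a \<le> k"
    and g: "\<forall>j\<le>b. X (a + 1 + j) = g * s ^ (b - j) * t ^ j" "g = 0 \<or> degree g + b \<le> k"
  shows "N *\<^sub>v rnc_point k x y = scroll_param a b (homog_eval 1 s x y) (homog_eval 1 t x y)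
    (homog_eval (k - a) f x y) (homog_eval (k - b) g x y)" (is "_ = ?v")
proof (rule eq_vecI)
  fix r assume "r < dim_vec ?v"
  then have r: "r < a + b + 2" by simp
  show "(N *\<^sub>v rnc_point k x y) $ r = ?v $ r"
  proof (cases "r \<le> a")
    case True
    then show ?thesis
      using f homog_eval_mult_powers[OF s t f(2) True] r
      by (simp add: mult_mat_vec_rnc_point[OF N_carrier] index_scroll_param)
  next
    case False
    then have "r - a - 1 \<le> b" "r = a + 1 + (r - a - 1)"
      using r by auto
    then show ?thesis
      using False g homog_eval_mult_powers[OF s t g(2) \<open>r - a - 1 \<le> b\<close>] r
      by (metis index_scroll_param mult_mat_vec_rnc_point[OF N_carrier r])
  qed
qed (use N_carrier in simp)

lemma row_polys_factor_linear:
  obtains s t f g where "degree s \<le> 1" "degree t \<le> 1"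
    "coeff s 0 * coeff t 1 - coeff s 1 * coeff t 0 \<noteq> 0"
    "\<forall>i\<le>a. X i = f * s ^ (a - i) * t ^ i" "f = 0 \<or> degree f + a \<le> k"
    "\<forall>j\<le>b. X (a + 1 + j) = g * s ^ (b - j) * t ^ j" "g = 0 \<or> degree g + b \<le> k"
proof -
  obtain s t f g where cop: "coprime s t"
    and f: "\<forall>i\<le>a. X i = f * s ^ (a - i) * t ^ i"
    and g: "\<forall>j\<le>b. X (a + 1 + j) = g * s ^ (b - j) * t ^ j"
    using row_polys_factor by blast
  have max_1: "max (degree s) (degree t) = 1"
    using row_factors_not_both_constant[OF f g] row_factors_degree_le_1[OF cop f g] by auto
  then have s: "degree s \<le> 1" and t: "degree t \<le> 1"
    by auto
  moreover have "coeff s 0 * coeff t 1 - coeff s 1 * coeff t 0 \<noteq> 0"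
    using coprime_linear_polys_det_nonzero[OF s t _ cop] max_1 by (auto simp: max_def split: if_splits)
  moreover have "f = 0 \<or> degree f + a \<le> k"
    using degree_block_factor[of s t a 0 f 1] cop f max_1 by auto
  moreover have "g = 0 \<or> degree g + b \<le> k"
    using degree_block_factor[OF cop g _, of 1] max_1 by auto
  ultimately show ?thesis
    using that f g by blast
qed

lemma rnc_graph_form:
  obtains S T :: "complex \<Rightarrow> complex \<Rightarrow> complex" and F G :: "complex poly" where
    "\<And>p q. (p, q) \<noteq> (0, 0) \<Longrightarrow> \<exists>x y. (x, y) \<noteq> (0, 0) \<and> S x y = p \<and> T x y = q"
    "F = 0 \<or> degree F + a \<le> k" "G = 0 \<or> degree G + b \<le> k"
    "\<And>x y. N *\<^sub>v rnc_point k x y = scroll_param a b (S x y) (T x y)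
      (homog_eval (k - a) F (S x y) (T x y)) (homog_eval (k - b) G (S x y) (T x y))"
proof -
  obtain s t f g where s: "degree s \<le> 1" and t: "degree t \<le> 1"
    and det: "coeff s 0 * coeff t 1 - coeff s 1 * coeff t 0 \<noteq> 0"
    and f: "\<forall>i\<le>a. X i = f * s ^ (a - i) * t ^ i" "f = 0 \<or> degree f + a \<le> k"
    and g: "\<forall>j\<le>b. X (a + 1 + j) = g * s ^ (b - j) * t ^ j" "g = 0 \<or> degree g + b \<le> k"
    using row_polys_factor_linear by blast
  obtain l1 l2 where l: "degree l1 \<le> 1" "degree l2 \<le> 1"
    and inv: "\<And>x y. homog_eval 1 l1 (homog_eval 1 s x y) (homog_eval 1 t x y) = x"
      "\<And>x y. homog_eval 1 l2 (homog_eval 1 s x y) (homog_eval 1 t x y) = y"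
      "\<And>p q. homog_eval 1 s (homog_eval 1 l1 p q) (homog_eval 1 l2 p q) = p"
      "\<And>p q. homog_eval 1 t (homog_eval 1 l1 p q) (homog_eval 1 l2 p q) = q"
    using linear_change_of_coordinates[OF s t det] by blast
  define F where "F = homog_subst (k - a) f l1 l2"
  define G where "G = homog_subst (k - b) g l1 l2"
  show ?thesis
  proof
    fix p q :: complex assume pq: "(p, q) \<noteq> (0, 0)"
    have "(homog_eval 1 l1 p q, homog_eval 1 l2 p q) \<noteq> (0, 0)"
      using inv(3,4)[of p q] pq by (auto simp: homog_eval_def)
    with inv(3,4) show "\<exists>x y. (x, y) \<noteq> (0, 0) \<and> homog_eval 1 s x y = p \<and> homog_eval 1 t x y = q"
      by blast
  next
    show "F = 0 \<or> degree F + a \<le> k" "G = 0 \<or> degree G + b \<le> k"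
      using f(2) g(2) degree_homog_subst[OF l, of "k - a" f] degree_homog_subst[OF l, of "k - b" g]
      by (auto simp: F_def G_def)
  next
    fix x y
    show "N *\<^sub>v rnc_point k x y = scroll_param a b (homog_eval 1 s x y) (homog_eval 1 t x y)
      (homog_eval (k - a) F (homog_eval 1 s x y) (homog_eval 1 t x y))
      (homog_eval (k - b) G (homog_eval 1 s x y) (homog_eval 1 t x y))"
      unfolding F_def G_def homog_eval_homog_subst[OF l] inv(1,2)
      by (rule rnc_point_in_scroll_coordinates[OF s t f g])
  qed
qed

lemma N_mult_vec_inj:
  assumes "w \<in> carrier_vec (k + 1)" "w' \<in> carrier_vec (k + 1)" "N *\<^sub>v w = N *\<^sub>v w'"
  shows "w = w'"
proof -
  have "N *\<^sub>v (w - w') = 0\<^sub>v (a + b + 2)"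
    using assms N_carrier by (simp add: mult_minus_distrib_mat_vec)
  then have "w - w' = 0\<^sub>v (k + 1)"
    using N_inj assms by simp
  show ?thesis
  proof (rule eq_vecI)
    fix i assume "i < dim_vec w'"
    then have "(w - w') $ i = 0"
      using \<open>w - w' = 0\<^sub>v (k + 1)\<close> assms(2) by simp
    then show "w $ i = w' $ i"
      using \<open>i < dim_vec w'\<close> assms(1,2) by simp
  qed (use assms in simp)
qed

lemma rnc_preimage_of_scroll_cone:
  assumes w: "w \<in> carrier_vec (k + 1)" and "N *\<^sub>v w \<in> scroll_cone a b"
  shows "w \<in> rnc_cone k"
proof -
  obtain S T F G where surj: "\<And>p q. (p, q) \<noteq> (0, 0) \<Longrightarrow> \<exists>x y. (x, y) \<noteq> (0, 0) \<and> S x y = p \<and> T x y = q"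
    and F: "F = 0 \<or> degree F + a \<le> k" and G: "G = 0 \<or> degree G + b \<le> k"
    and graph: "\<And>x y. N *\<^sub>v rnc_point k x y = scroll_param a b (S x y) (T x y)
      (homog_eval (k - a) F (S x y) (T x y)) (homog_eval (k - b) G (S x y) (T x y))"
    using rnc_graph_form by blast
  obtain c p q u v where c: "c \<noteq> 0" and pq: "(p, q) \<noteq> (0, 0)" and uv: "(u, v) \<noteq> (0, 0)"
    and Nw: "N *\<^sub>v w = c \<cdot>\<^sub>v scroll_param a b p q u v"
    using \<open>N *\<^sub>v w \<in> scroll_cone a b\<close> unfolding scroll_cone_def proj_cone_def by blast
  define F0 where "F0 = homog_eval (k - a) F p q"
  define G0 where "G0 = homog_eval (k - b) G p q"
  have cross: "u * G0 = v * F0"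
    unfolding F0_def G0_def by (rule scroll_point_on_graph[OF N_carrier k_le F G graph w Nw c pq])
  obtain x y where xy: "(x, y) \<noteq> (0, 0)" "S x y = p" "T x y = q"
    using surj[OF pq] by blast
  have curve: "N *\<^sub>v rnc_point k x y = scroll_param a b p q F0 G0"
    by (simp add: graph xy F0_def G0_def)
  have "(F0, G0) \<noteq> (0, 0)"
  proof
    assume "(F0, G0) = (0, 0)"
    then have "N *\<^sub>v rnc_point k x y = 0\<^sub>v (a + b + 2)"
      by (simp add: curve scroll_param_0_0)
    with N_inj[rule_format, OF rnc_point_carrier] rnc_point_nonzero[OF xy(1)] show False
      by blast
  qed
  then obtain \<mu> where \<mu>: "u = \<mu> * F0" "v = \<mu> * G0"
    using proportional_if_cross_products_eq cross by metis
  have "N *\<^sub>v w = N *\<^sub>v ((c * \<mu>) \<cdot>\<^sub>v rnc_point k x y)"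
    by (simp add: Nw \<mu> scroll_param_smult mult_mat_vec[OF N_carrier rnc_point_carrier] curve
        smult_smult_assoc)
  then have "w = (c * \<mu>) \<cdot>\<^sub>v rnc_point k x y"
    by (rule N_mult_vec_inj[OF w smult_carrier_vec[THEN iffD2, OF rnc_point_carrier]])
  moreover have "c * \<mu> \<noteq> 0"
    using c uv \<mu> by auto
  ultimately show ?thesis
    using smult_rnc_point_in_rnc_cone[OF xy(1)] by simp
qed

end

lemma rnc_in_scroll_transform:
  assumes "1 \<le> a" "1 \<le> b" "2 \<le> k" "k \<le> a + b"
    and B: "lin_embedding (a + b + 1) k B"
    and A: "A \<in> carrier_mat (a + b + 2) (a + b + 2)"
    and A': "A' \<in> carrier_mat (a + b + 2) (a + b + 2)" "A * A' = 1\<^sub>m (a + b + 2)"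
      "A' * A = 1\<^sub>m (a + b + 2)"
    and curve: "(\<lambda>x. B *\<^sub>v x) ` rnc_cone k \<subseteq> (\<lambda>x. A *\<^sub>v x) ` scroll_cone a b"
  shows "rnc_in_scroll a b k (A' * B)"
proof
  have B_carrier: "B \<in> carrier_mat (a + b + 2) (k + 1)"
    and B_inj: "\<forall>x\<in>carrier_vec (k + 1). B *\<^sub>v x = 0\<^sub>v (a + b + 2) \<longrightarrow> x = 0\<^sub>v (k + 1)"
    using B unfolding lin_embedding_def by (simp_all add: numeral_2_eq_2)
  then show "A' * B \<in> carrier_mat (a + b + 2) (k + 1)"
    using A' by simp
  show "\<forall>v\<in>carrier_vec (k + 1). (A' * B) *\<^sub>v v = 0\<^sub>v (a + b + 2) \<longrightarrow> v = 0\<^sub>v (k + 1)"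
  proof (intro ballI impI)
    fix v assume v: "v \<in> carrier_vec (k + 1)" and zero: "(A' * B) *\<^sub>v v = 0\<^sub>v (a + b + 2)"
    have "B *\<^sub>v v = A *\<^sub>v ((A' * B) *\<^sub>v v)"
      using mult_mat_vec_cancel_left[OF A'(1) A A'(2)] A' B_carrier v by simp
    also have "\<dots> = 0\<^sub>v (a + b + 2)"
      using zero A by auto
    finally show "v = 0\<^sub>v (k + 1)"
      using B_inj v by blast
  qed
  show "\<forall>s t. (s, t) \<noteq> (0, 0) \<longrightarrow> (A' * B) *\<^sub>v rnc_point k s t \<in> scroll_cone a b"
  proof (intro allI impI)
    fix s t :: complex assume "(s, t) \<noteq> (0, 0)"
    then have "B *\<^sub>v rnc_point k s t \<in> (\<lambda>x. A *\<^sub>v x) ` scroll_cone a b"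
      using curve smult_rnc_point_in_rnc_cone[of s t 1 k] by auto
    then show "(A' * B) *\<^sub>v rnc_point k s t \<in> scroll_cone a b"
      by (rule mult_mat_vec_in_preimage[OF A A'(1,3) B_carrier rnc_point_carrier
            scroll_cone_subset_carrier])
  qed
qed (use assms in auto)

lemma rnc_preimage_of_transformed_scroll:
  assumes "1 \<le> a" "1 \<le> b" "2 \<le> k" "k \<le> a + b"
    and B: "lin_embedding (a + b + 1) k B"
    and A: "A \<in> carrier_mat (a + b + 2) (a + b + 2)" "invertible_mat A"
    and curve: "(\<lambda>x. B *\<^sub>v x) ` rnc_cone k \<subseteq> (\<lambda>x. A *\<^sub>v x) ` scroll_cone a b"
    and w: "w \<in> carrier_vec (k + 1)" "B *\<^sub>v w \<in> (\<lambda>x. A *\<^sub>v x) ` scroll_cone a b"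
  shows "w \<in> rnc_cone k"
proof -
  obtain A' where A': "A' \<in> carrier_mat (a + b + 2) (a + b + 2)"
    "A * A' = 1\<^sub>m (a + b + 2)" "A' * A = 1\<^sub>m (a + b + 2)"
    using invertible_mat_inverse[OF A] by blast
  interpret rnc_in_scroll a b k "A' * B"
    using rnc_in_scroll_transform[OF assms(1-5) A(1) A' curve] .
  have "B \<in> carrier_mat (a + b + 2) (k + 1)"
    using B unfolding lin_embedding_def by (simp add: numeral_2_eq_2)
  then have "(A' * B) *\<^sub>v w \<in> scroll_cone a b"
    by (rule mult_mat_vec_in_preimage[OF A(1) A'(1,3) _ w(1) scroll_cone_subset_carrier w(2)])
  with w(1) show ?thesis
    by (rule rnc_preimage_of_scroll_cone)
qed

theorem lemma2p11:
  fixes n k :: nat and W Y L :: "complex vec set"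
  assumes "smooth_rat_normal_surface_scroll n W"
    and "rat_normal_curve n k Y"
    and "Y \<subseteq> W"
    and "2 \<le> k" and "k \<le> n - 1"
    and "lin_subspace n k L"
    and "Y \<subseteq> W \<inter> L"
  shows "Y = W \<inter> L"
proof -
  obtain a b A where ab: "1 \<le> a" "1 \<le> b" "a + b + 1 = n"
    and A: "A \<in> carrier_mat (n + 1) (n + 1)" "invertible_mat A"
    and W: "W = (\<lambda>x. A *\<^sub>v x) ` scroll_cone a b"
    using assms(1) unfolding smooth_rat_normal_surface_scroll_def by blast
  obtain B where B: "lin_embedding n k B" and Y: "Y = (\<lambda>x. B *\<^sub>v x) ` rnc_cone k"
    using assms(2) unfolding rat_normal_curve_def by blast
  have "W \<inter> L \<subseteq> Y"
  proof
    fix z assume z: "z \<in> W \<inter> L"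
    then obtain w where w: "w \<in> carrier_vec (k + 1)" "z = B *\<^sub>v w"
      using lin_subspace_in_range[OF B assms(6)] assms(7) Y by blast
    have "w \<in> rnc_cone k"
      by (rule rnc_preimage_of_transformed_scroll[of a b k B A])
        (use ab assms(3-5) B A W Y z w in \<open>auto simp flip: ab(3)\<close>)
    with w(2) show "z \<in> Y"
      unfolding Y by blast
  qed
  with assms(7) show ?thesis
    by blast
qed

end
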